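(* Let $X,Y$ be Banach spaces, let $F:X\rightrightarrows Y$ be a closed convex set-valued mapping, let $A\subset X$ be a closed convex set, let $\bar y\in Y$, put $S:=F^{-1}(\bar y)\cap A$, and let $\bar x\in S$. Suppose that the set $DF^{-1}(\bar y,\bar x)(B_Y)\cap(T(A,\bar x)+B_X)\cap B_X$ is relatively compact in $X$. Then ${\rm ssubreg}_AF(\bar x,\bar y)<+\infty$ if and only if $$DF^{-1}(\bar y,\bar x)(0)\cap T(A,\bar x)=\{0\}.$$
   Context: $B_X,B_Y$ are the closed unit balls; $B(x,\delta)$ is the open ball. $F$ closed convex means ${\rm gph}(F)=\{(x,y):y\in F(x)\}$ is closed and convex in $X\times Y$. For a closed convex set $C$ and $a\in C$, the contingent cone $T(C,a)$ is the set of $v$ for which there exist $v_n\to v$, $t_n\to0^+$ with $a+t_nv_n\in C$ for all $n$. For $(x,y)\in{\rm gph}(F)$, $DF^{-1}(y,x)(v):=\{u\in X:(u,v)\in T({\rm gph}(F),(x,y))\}$ and $DF^{-1}(y,x)(W)=\bigcup_{v\in W}DF^{-1}(y,x)(v)$ for $W\subset Y$. ${\rm ssubreg}_AF(\bar x,\bar y):=\inf\{\tau>0:\exists\delta>0$ such that $\|x-\bar x\|\le\tau(d(\bar y,F(x))+d(x,A))$ for all $x\in B(\bar x,\delta)\}$, with $\inf\emptyset=+\infty$. *)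

theory Defs
  imports "HOL-Analysis.Analysis"
begin

definition gph :: "('a \<Rightarrow> 'b set) \<Rightarrow> ('a \<times> 'b) set" where
  "gph F = {(x, y). y \<in> F x}"

definition contingent_cone :: "'a::real_normed_vector set \<Rightarrow> 'a \<Rightarrow> 'a set" where
  "contingent_cone C a = {v. \<exists>vs ts. vs \<longlonglongrightarrow> v \<and> ts \<longlonglongrightarrow> 0 \<and> (\<forall>n. ts n > 0)
       \<and> (\<forall>n. a + ts n *\<^sub>R vs n \<in> C)}"

definition DFinv :: "('a::real_normed_vector \<Rightarrow> 'b::real_normed_vector set) \<Rightarrow> 'b \<Rightarrow> 'a \<Rightarrow> 'b \<Rightarrow> 'a set" where
  "DFinv F y x v = {u. (u, v) \<in> contingent_cone (gph F) (x, y)}"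

definition DFinv_set :: "('a::real_normed_vector \<Rightarrow> 'b::real_normed_vector set) \<Rightarrow> 'b \<Rightarrow> 'a \<Rightarrow> 'b set \<Rightarrow> 'a set" where
  "DFinv_set F y x W = (\<Union>v\<in>W. DFinv F y x v)"

definition edist :: "'a::metric_space \<Rightarrow> 'a set \<Rightarrow> ereal" where
  "edist y S = (if S = {} then \<infinity> else ereal (infdist y S))"

text \<open>Strong subregularity modulus relative to A (inf of the empty set is +\<infinity>).\<close>
definition ssubreg :: "'a::real_normed_vector set \<Rightarrow> ('a \<Rightarrow> 'b::real_normed_vector set) \<Rightarrow> 'a \<Rightarrow> 'b \<Rightarrow> ereal" where
  "ssubreg A F xb yb = Inf (ereal ` {\<tau>. \<tau> > 0 \<and> (\<exists>\<delta>>0. \<forall>x\<in>ball xb \<delta>.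
       ereal (norm (x - xb)) \<le> ereal \<tau> * (edist yb (F x) + edist x A))})"

end

theory Submission
  imports Defs
begin

text \<open>
  If \<open>\<tau>\<close> is a subregularity constant and \<open>u \<noteq> 0\<close> lies in both cones, moving from \<open>xb\<close> a small
  step \<open>t\<close> along approximating directions gives points whose distance to \<open>xb\<close> is of order \<open>t\<close>
  while the residuals are \<open>o(t)\<close>, contradicting the bound. Conversely, if no constant works,
  there are points \<open>x\<^sub>n \<rightarrow> xb\<close> whose residuals are \<open>o(\<parallel>x\<^sub>n - xb\<parallel>)\<close>; by convexity the normalised
  directions \<open>(x\<^sub>n - xb)/\<parallel>x\<^sub>n - xb\<parallel>\<close> lie in the relatively compact set of the hypothesis, and a
  limit point is a unit vector in \<open>DF\<^sup>-\<^sup>1(yb,xb)(0) \<inter> T(A,xb)\<close>.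
\<close>

definition ssubreg_bound ::
    "'a::real_normed_vector set \<Rightarrow> ('a \<Rightarrow> 'b::real_normed_vector set) \<Rightarrow> 'a \<Rightarrow> 'b \<Rightarrow> real \<Rightarrow> bool" where
  "ssubreg_bound A F xb yb \<tau> \<longleftrightarrow> \<tau> > 0 \<and> (\<exists>\<delta>>0. \<forall>x\<in>ball xb \<delta>.
       ereal (norm (x - xb)) \<le> ereal \<tau> * (edist yb (F x) + edist x A))"

lemma ssubreg_less_infinity_iff:
  "ssubreg A F xb yb < \<infinity> \<longleftrightarrow> (\<exists>\<tau>. ssubreg_bound A F xb yb \<tau>)"
proof -
  have ssubreg_eq: "ssubreg A F xb yb = Inf (ereal ` Collect (ssubreg_bound A F xb yb))"
    unfolding ssubreg_def ssubreg_bound_def[abs_def] by (rule refl)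
  show ?thesis
  proof
    assume "ssubreg A F xb yb < \<infinity>"
    show "\<exists>\<tau>. ssubreg_bound A F xb yb \<tau>"
    proof (rule ccontr)
      assume "\<nexists>\<tau>. ssubreg_bound A F xb yb \<tau>"
      then have no_bound: "Collect (ssubreg_bound A F xb yb) = {}"
        by simp
      have "ssubreg A F xb yb = \<infinity>"
        unfolding ssubreg_eq no_bound by (simp add: top_ereal_def)
      with \<open>ssubreg A F xb yb < \<infinity>\<close> show False by simp
    qed
  next
    assume "\<exists>\<tau>. ssubreg_bound A F xb yb \<tau>"
    then obtain \<tau> where "ssubreg_bound A F xb yb \<tau>" by blast
    then have "ssubreg A F xb yb \<le> ereal \<tau>"
      unfolding ssubreg_eq by (intro Inf_lower) auto
    then show "ssubreg A F xb yb < \<infinity>"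
      using ereal_less_PInfty by (rule le_less_trans) simp
  qed
qed

lemma contingent_coneI:
  assumes "vs \<longlonglongrightarrow> v" "ts \<longlonglongrightarrow> 0" "\<And>n. ts n > 0" "\<And>n. a + ts n *\<^sub>R vs n \<in> C"
  shows "v \<in> contingent_cone C a"
  using assms unfolding contingent_cone_def by blast

lemma DFinvI:
  assumes "us \<longlonglongrightarrow> u" "vs \<longlonglongrightarrow> v" "ts \<longlonglongrightarrow> 0" "\<And>n. ts n > 0"
    and "\<And>n. y + ts n *\<^sub>R vs n \<in> F (x + ts n *\<^sub>R us n)"
  shows "u \<in> DFinv F y x v"
  unfolding DFinv_def mem_Collect_eq
proof (rule contingent_coneI[of "\<lambda>n. (us n, vs n)" _ ts])
  show "(\<lambda>n. (us n, vs n)) \<longlonglongrightarrow> (u, v)"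
    using assms(1,2) by (rule tendsto_Pair)
qed (use assms(3-) in \<open>auto simp: gph_def\<close>)

lemma zero_in_contingent_cone:
  fixes C :: "'a::real_normed_vector set"
  assumes "a \<in> C"
  shows "0 \<in> contingent_cone C a"
  by (rule contingent_coneI[of "\<lambda>n. 0" _ "\<lambda>n. inverse (real (Suc n))"])
     (use assms LIMSEQ_inverse_real_of_nat in auto)

lemma convex_scaled_segment:
  fixes C :: "'a::real_normed_vector set"
  assumes "convex C" "a \<in> C" "a + s *\<^sub>R w \<in> C" "0 < t" "t \<le> s"
  shows "a + t *\<^sub>R w \<in> C"
proof -
  have "(1 - t/s) *\<^sub>R a + (t/s) *\<^sub>R (a + s *\<^sub>R w) \<in> C"
    using assms by (intro convexD) auto
  moreover have "(1 - t/s) *\<^sub>R a + (t/s) *\<^sub>R (a + s *\<^sub>R w) = a + t *\<^sub>R w"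
    using assms by (simp add: algebra_simps)
  ultimately show ?thesis by simp
qed

lemma contingent_cone_convexI:
  fixes C :: "'a::real_normed_vector set"
  assumes "convex C" "a \<in> C" "a + t *\<^sub>R w \<in> C" "0 < t"
  shows "w \<in> contingent_cone C a"
proof (rule contingent_coneI[of "\<lambda>n. w" _ "\<lambda>n. t * inverse (real (Suc n))"])
  have "(\<lambda>n. t * inverse (real (Suc n))) \<longlonglongrightarrow> t * 0"
    by (intro tendsto_mult tendsto_const LIMSEQ_inverse_real_of_nat)
  then show "(\<lambda>n. t * inverse (real (Suc n))) \<longlonglongrightarrow> 0" by simp
  fix n
  show "0 < t * inverse (real (Suc n))" using assms by simp
  have "t * inverse (real (Suc n)) \<le> t" using assms
    by (simp add: mult_le_cancel_left1 field_simps)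
  then show "a + (t * inverse (real (Suc n))) *\<^sub>R w \<in> C"
    using convex_scaled_segment[OF assms(1,2,3)] assms(4) by simp
qed simp

lemma LIMSEQ_norm_less_inverse_Suc:
  fixes f :: "nat \<Rightarrow> 'a::real_normed_vector"
  assumes "\<And>n. norm (f n) < inverse (real (Suc n))"
  shows "f \<longlonglongrightarrow> 0"
  by (rule Lim_null_comparison[OF _ LIMSEQ_inverse_real_of_nat])
     (use assms in \<open>auto intro: always_eventually less_imp_le\<close>)

lemma ssubreg_estimate_along_directions:
  assumes est: "ereal (norm (t *\<^sub>R p)) \<le> ereal \<tau> * (edist yb (F (xb + t *\<^sub>R p)) + edist (xb + t *\<^sub>R p) A)"
    and "\<tau> \<ge> 0" "t > 0"
    and yF: "yb + t *\<^sub>R q \<in> F (xb + t *\<^sub>R p)" and aA: "xb + t *\<^sub>R w \<in> A"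
  shows "norm p \<le> \<tau> * (norm q + norm (p - w))"
proof -
  let ?x = "xb + t *\<^sub>R p"
  have "infdist yb (F ?x) \<le> dist yb (yb + t *\<^sub>R q)"
    by (rule infdist_le[OF yF])
  moreover have "infdist ?x A \<le> dist ?x (xb + t *\<^sub>R w)"
    by (rule infdist_le[OF aA])
  ultimately have "infdist yb (F ?x) + infdist ?x A \<le> t * (norm q + norm (p - w))"
    using \<open>t > 0\<close> by (simp add: dist_norm distrib_left flip: scaleR_diff_right)
  moreover have "F ?x \<noteq> {}" "A \<noteq> {}"
    using yF aA by auto
  then have "t * norm p \<le> \<tau> * (infdist yb (F ?x) + infdist ?x A)"
    using est \<open>t > 0\<close> by (simp add: edist_def)
  ultimately have "t * norm p \<le> t * (\<tau> * (norm q + norm (p - w)))"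
    using mult_left_mono \<open>\<tau> \<ge> 0\<close> by (fastforce simp: algebra_simps)
  then show ?thesis using \<open>t > 0\<close> by simp
qed

lemma ssubreg_bound_kernel_norm_le:
  assumes "convex A" "xb \<in> A" "ssubreg_bound A F xb yb \<tau>"
    and uD: "u \<in> DFinv F yb xb 0" and uT: "u \<in> contingent_cone A xb" and "\<epsilon> > 0"
  shows "norm u \<le> (1 + 3 * \<tau>) * \<epsilon>"
proof -
  obtain \<delta> where \<tau>: "\<tau> > 0" and "\<delta> > 0" and bound:
      "\<forall>x\<in>ball xb \<delta>. ereal (norm (x - xb)) \<le> ereal \<tau> * (edist yb (F x) + edist x A)"
    using assms(3) unfolding ssubreg_bound_def by blast
  obtain vs ts where vs: "vs \<longlonglongrightarrow> (u, 0)" and ts: "ts \<longlonglongrightarrow> 0" "\<forall>n. ts n > 0"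
    and gph: "\<forall>n. (xb, yb) + ts n *\<^sub>R vs n \<in> gph F"
    using uD unfolding DFinv_def contingent_cone_def by auto
  obtain ws ss where ws: "ws \<longlonglongrightarrow> u" and ss: "\<forall>n. ss n > 0"
    and inA: "\<forall>n. xb + ss n *\<^sub>R ws n \<in> A"
    using uT unfolding contingent_cone_def by auto
  have fst: "(\<lambda>n. fst (vs n)) \<longlonglongrightarrow> u" and snd: "(\<lambda>n. snd (vs n)) \<longlonglongrightarrow> 0"
    using tendsto_fst[OF vs] tendsto_snd[OF vs] by simp_all
  have step: "(\<lambda>n. ts n *\<^sub>R fst (vs n)) \<longlonglongrightarrow> 0"
    using tendsto_scaleR[OF ts(1) fst] by simp
  obtain k where k: "dist (ws k) u < \<epsilon>"
    using tendstoD[OF ws \<open>\<epsilon> > 0\<close>] eventually_sequentially by auto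
  have "\<forall>\<^sub>F n in sequentially. dist (fst (vs n)) u < \<epsilon> \<and> dist (snd (vs n)) 0 < \<epsilon>
      \<and> dist (ts n) 0 < ss k \<and> dist (ts n *\<^sub>R fst (vs n)) 0 < \<delta>"
    using tendstoD[OF fst \<open>\<epsilon> > 0\<close>] tendstoD[OF snd \<open>\<epsilon> > 0\<close>]
      tendstoD[OF ts(1) ss[rule_format, of k]] tendstoD[OF step \<open>\<delta> > 0\<close>]
    by (intro eventually_conj) auto
  then obtain n where n: "dist (fst (vs n)) u < \<epsilon>" "norm (snd (vs n)) < \<epsilon>"
      "ts n < ss k" "norm (ts n *\<^sub>R fst (vs n)) < \<delta>"
    using eventually_sequentially ts(2) by fastforce
  let ?p = "fst (vs n)" and ?t = "ts n"
  have "?t > 0" using ts(2) by blast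
  \<comment> \<open>Convexity of \<open>A\<close> lets the step \<open>ss k\<close> along \<open>ws k\<close> be shortened to the step \<open>ts n\<close> of the graph.\<close>
  have "norm ?p \<le> \<tau> * (norm (snd (vs n)) + norm (?p - ws k))"
  proof (rule ssubreg_estimate_along_directions)
    show "ereal (norm (?t *\<^sub>R ?p)) \<le> ereal \<tau> *
        (edist yb (F (xb + ?t *\<^sub>R ?p)) + edist (xb + ?t *\<^sub>R ?p) A)"
      using bound[rule_format, of "xb + ?t *\<^sub>R ?p"] n(4) by (simp add: dist_norm)
    show "yb + ?t *\<^sub>R snd (vs n) \<in> F (xb + ?t *\<^sub>R ?p)"
      using gph[rule_format, of n] by (cases "vs n") (simp add: gph_def)
    show "xb + ?t *\<^sub>R ws k \<in> A"
      using convex_scaled_segment[OF assms(1,2) inA[rule_format, of k] \<open>?t > 0\<close>] n(3) by simp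
  qed (use \<tau> \<open>?t > 0\<close> in auto)
  moreover have "norm (?p - ws k) \<le> 2 * \<epsilon>"
    using n(1) k norm_triangle_ineq4[of "?p - u" "ws k - u"] by (simp add: dist_norm)
  ultimately have "norm ?p \<le> \<tau> * (3 * \<epsilon>)"
    using n(2) \<tau> mult_left_mono[of "norm (snd (vs n)) + norm (?p - ws k)" "3 * \<epsilon>" \<tau>] by linarith
  moreover have "norm u \<le> norm ?p + \<epsilon>"
    using n(1) norm_triangle_ineq2[of u ?p] by (simp add: dist_norm norm_minus_commute)
  ultimately show ?thesis
    by (simp add: algebra_simps)
qed

lemma ssubreg_bound_imp_trivial_kernel:
  assumes "convex A" "xb \<in> A" "ssubreg_bound A F xb yb \<tau>"
    and "u \<in> DFinv F yb xb 0" "u \<in> contingent_cone A xb"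
  shows "u = 0"
proof -
  have "\<tau> > 0"
    using assms(3) unfolding ssubreg_bound_def by blast
  have "norm u \<le> 0 + e" if "e > 0" for e
    using ssubreg_bound_kernel_norm_le[OF assms, of "e / (1 + 3 * \<tau>)"] \<open>\<tau> > 0\<close> \<open>e > 0\<close>
    by simp
  then show "u = 0"
    using field_le_epsilon[of "norm u" 0] by simp
qed

lemma not_ssubreg_estimateE:
  assumes "\<not> ereal (norm (x - xb)) \<le> ereal c * (edist yb (F x) + edist x A)"
    and "c > 0" "A \<noteq> {}"
  obtains y a where "y \<in> F x" "a \<in> A"
    "c * dist yb y < norm (x - xb)" "c * dist x a < norm (x - xb)"
proof -
  have "F x \<noteq> {}"
    using assms(1,2) by (auto simp: edist_def)
  then have "c * infdist yb (F x) + c * infdist x A < norm (x - xb)"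
    using assms by (simp add: edist_def not_le distrib_left)
  moreover have "c * infdist yb (F x) \<ge> 0" "c * infdist x A \<ge> 0"
    using \<open>c > 0\<close> by (simp_all add: infdist_nonneg)
  ultimately have "Inf (dist yb ` F x) < norm (x - xb) / c" "Inf (dist x ` A) < norm (x - xb) / c"
    using \<open>c > 0\<close> \<open>F x \<noteq> {}\<close> \<open>A \<noteq> {}\<close>
    by (simp_all add: infdist_notempty pos_less_divide_eq mult.commute)
  then obtain y a where "y \<in> F x" "dist yb y < norm (x - xb) / c" "a \<in> A" "dist x a < norm (x - xb) / c"
    using cInf_lessD[of "dist yb ` F x"] cInf_lessD[of "dist x ` A"] \<open>F x \<noteq> {}\<close> \<open>A \<noteq> {}\<close>
    by blast
  with that show ?thesis
    using \<open>c > 0\<close> by (simp add: pos_less_divide_eq mult.commute)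
qed

lemma not_ssubreg_bound_imp_sequences:
  assumes "\<nexists>\<tau>. ssubreg_bound A F xb yb \<tau>" "A \<noteq> {}"
  obtains t u v w where
    "\<And>n. t n > 0" "\<And>n. t n < inverse (real (Suc n))" "\<And>n. norm (u n) = 1"
    "\<And>n. norm (v n) < inverse (real (Suc n))" "\<And>n. norm (u n - w n) < inverse (real (Suc n))"
    "\<And>n. yb + t n *\<^sub>R v n \<in> F (xb + t n *\<^sub>R u n)" "\<And>n. xb + t n *\<^sub>R w n \<in> A"
proof -
  have "\<exists>x y a. norm (x - xb) < inverse (real (Suc n)) \<and> y \<in> F x \<and> a \<in> A \<and>
      real (Suc n) * dist yb y < norm (x - xb) \<and> real (Suc n) * dist x a < norm (x - xb)" for n
  proof -
    obtain x where "dist xb x < inverse (real (Suc n))"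
      and "\<not> ereal (norm (x - xb)) \<le> ereal (real (Suc n)) * (edist yb (F x) + edist x A)"
      using assms(1) unfolding ssubreg_bound_def
      by (metis inverse_positive_iff_positive mem_ball of_nat_0_less_iff zero_less_Suc)
    then show ?thesis
      using not_ssubreg_estimateE[of x xb "real (Suc n)"] assms(2)
      by (metis dist_commute dist_norm of_nat_0_less_iff zero_less_Suc)
  qed
  then obtain X Y Z where XYZ: "\<And>n. norm (X n - xb) < inverse (real (Suc n)) \<and> Y n \<in> F (X n) \<and>
      Z n \<in> A \<and> real (Suc n) * dist yb (Y n) < norm (X n - xb) \<and>
      real (Suc n) * dist (X n) (Z n) < norm (X n - xb)"
    by metis
  define t where "t n = norm (X n - xb)" for n
  have "t n > 0" for n
    using XYZ[of n] unfolding t_def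
    by (meson le_less_trans mult_nonneg_nonneg of_nat_0_le_iff zero_le_dist)
  show ?thesis
  proof (rule that[of t "\<lambda>n. (X n - xb) /\<^sub>R t n" "\<lambda>n. (Y n - yb) /\<^sub>R t n" "\<lambda>n. (Z n - xb) /\<^sub>R t n"])
    fix n
    have tn: "t n > 0" by fact
    show "t n > 0" "t n < inverse (real (Suc n))" using tn XYZ[of n] by (auto simp: t_def)
    show "norm ((X n - xb) /\<^sub>R t n) = 1" using tn by (simp add: t_def)
    have scaled: "d / t n < inverse (real (Suc n))" if "real (Suc n) * d < t n" for d
      using that tn by (simp add: divide_less_eq field_simps del: of_nat_Suc)
    have "norm ((Y n - yb) /\<^sub>R t n) = dist yb (Y n) / t n"
      using tn by (simp add: dist_norm norm_minus_commute divide_inverse_commute)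
    also have "\<dots> < inverse (real (Suc n))"
      by (rule scaled) (use XYZ[of n] in \<open>simp add: t_def\<close>)
    finally show "norm ((Y n - yb) /\<^sub>R t n) < inverse (real (Suc n))" .
    have "norm ((X n - xb) /\<^sub>R t n - (Z n - xb) /\<^sub>R t n) = dist (X n) (Z n) / t n"
      using tn by (simp add: dist_norm divide_inverse_commute flip: scaleR_diff_right)
    also have "\<dots> < inverse (real (Suc n))"
      by (rule scaled) (use XYZ[of n] in \<open>simp add: t_def\<close>)
    finally show "norm ((X n - xb) /\<^sub>R t n - (Z n - xb) /\<^sub>R t n) < inverse (real (Suc n))" .
    show "yb + t n *\<^sub>R ((Y n - yb) /\<^sub>R t n) \<in> F (xb + t n *\<^sub>R ((X n - xb) /\<^sub>R t n))"
      "xb + t n *\<^sub>R ((Z n - xb) /\<^sub>R t n) \<in> A"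
      using XYZ[of n] tn by simp_all
  qed
qed

lemma step_direction_in_DFinv_set_Int:
  assumes "convex (gph F)" "convex A" "xb \<in> A" "(xb, yb) \<in> gph F"
    and "t > 0" "norm u \<le> 1" "norm v \<le> 1" "norm (u - w) \<le> 1"
    and inF: "yb + t *\<^sub>R v \<in> F (xb + t *\<^sub>R u)" and inA: "xb + t *\<^sub>R w \<in> A"
  shows "u \<in> DFinv_set F yb xb (cball 0 1)
      \<inter> {d + b | d b. d \<in> contingent_cone A xb \<and> b \<in> cball 0 1} \<inter> cball 0 1"
proof -
  have "(xb, yb) + t *\<^sub>R (u, v) \<in> gph F"
    using inF by (simp add: gph_def)
  then have "(u, v) \<in> contingent_cone (gph F) (xb, yb)"
    using contingent_cone_convexI[OF assms(1,4)] \<open>t > 0\<close> by blast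
  then have "u \<in> DFinv_set F yb xb (cball 0 1)"
    using \<open>norm v \<le> 1\<close> by (auto simp: DFinv_set_def DFinv_def)
  moreover have "u \<in> {d + b | d b. d \<in> contingent_cone A xb \<and> b \<in> cball 0 1}"
  proof -
    have "w \<in> contingent_cone A xb"
      using contingent_cone_convexI[OF assms(2,3) inA \<open>t > 0\<close>] .
    moreover have "u - w \<in> cball 0 1" "u = w + (u - w)"
      using \<open>norm (u - w) \<le> 1\<close> by (simp_all add: dist_norm norm_minus_commute)
    ultimately show ?thesis by blast
  qed
  moreover have "u \<in> cball 0 1"
    using \<open>norm u \<le> 1\<close> by simp
  ultimately show ?thesis by blast
qed

lemma trivial_kernel_imp_ssubreg_bound:
  fixes F :: "'a::banach \<Rightarrow> 'b::banach set"
  assumes "convex (gph F)" "convex A" "xb \<in> A" "(xb, yb) \<in> gph F"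
    and compact: "compact (closure (DFinv_set F yb xb (cball 0 1)
           \<inter> {t + b | t b. t \<in> contingent_cone A xb \<and> b \<in> cball 0 1} \<inter> cball 0 1))"
    and kernel: "DFinv F yb xb 0 \<inter> contingent_cone A xb = {0}"
  shows "\<exists>\<tau>. ssubreg_bound A F xb yb \<tau>"
proof (rule ccontr)
  assume no_bound: "\<nexists>\<tau>. ssubreg_bound A F xb yb \<tau>"
  have "A \<noteq> {}"
    using \<open>xb \<in> A\<close> by blast
  obtain t u v w where tpos: "\<And>n. t n > 0" and tsmall: "\<And>n. t n < inverse (real (Suc n))"
    and unit: "\<And>n. norm (u n) = 1" and vsmall: "\<And>n. norm (v n) < inverse (real (Suc n))"
    and uwsmall: "\<And>n. norm (u n - w n) < inverse (real (Suc n))"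
    and inF: "\<And>n. yb + t n *\<^sub>R v n \<in> F (xb + t n *\<^sub>R u n)" and inA: "\<And>n. xb + t n *\<^sub>R w n \<in> A"
    by (rule not_ssubreg_bound_imp_sequences[OF no_bound \<open>A \<noteq> {}\<close>]) blast
  have inv_le: "inverse (real (Suc n)) \<le> 1" for n
    by (simp add: field_simps)
  have u_in: "\<forall>n. u n \<in> closure (DFinv_set F yb xb (cball 0 1)
      \<inter> {d + b | d b. d \<in> contingent_cone A xb \<and> b \<in> cball 0 1} \<inter> cball 0 1)"
  proof
    fix n
    have "norm (v n) \<le> 1" "norm (u n - w n) \<le> 1"
      using vsmall[of n] uwsmall[of n] inv_le[of n] by linarith+
    then show "u n \<in> closure (DFinv_set F yb xb (cball 0 1)
        \<inter> {d + b | d b. d \<in> contingent_cone A xb \<and> b \<in> cball 0 1} \<inter> cball 0 1)"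
      by (intro closure_subset[THEN subsetD]
          step_direction_in_DFinv_set_Int[OF assms(1-4) tpos[of n] _ _ _ inF[of n] inA[of n]])
        (simp_all add: unit)
  qed
  obtain l r where r: "strict_mono r" and lim: "(u \<circ> r) \<longlonglongrightarrow> l"
    using seq_compactE[OF compact_imp_seq_compact[OF compact] u_in] by blast
  have "norm l = 1"
    using tendsto_norm[OF lim] unit LIMSEQ_unique[OF _ tendsto_const] by (simp add: o_def)
  have "t \<longlonglongrightarrow> 0"
    by (rule LIMSEQ_norm_less_inverse_Suc) (use tsmall tpos in \<open>simp add: less_imp_le\<close>)
  then have t0: "(t \<circ> r) \<longlonglongrightarrow> 0"
    using r by (rule LIMSEQ_subseq_LIMSEQ)
  have "(v \<circ> r) \<longlonglongrightarrow> 0"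
    using LIMSEQ_norm_less_inverse_Suc[OF vsmall] r by (rule LIMSEQ_subseq_LIMSEQ)
  then have "l \<in> DFinv F yb xb 0"
    using lim t0 tpos inF by (intro DFinvI[of "u \<circ> r" _ "v \<circ> r" _ "t \<circ> r"]) auto
  moreover have "(w \<circ> r) \<longlonglongrightarrow> l"
  proof -
    have "((\<lambda>n. u n - w n) \<circ> r) \<longlonglongrightarrow> 0"
      using LIMSEQ_norm_less_inverse_Suc[OF uwsmall] r by (rule LIMSEQ_subseq_LIMSEQ)
    from tendsto_diff[OF lim this] show ?thesis
      by (simp add: o_def)
  qed
  then have "l \<in> contingent_cone A xb"
    using t0 tpos inA by (intro contingent_coneI[of "w \<circ> r" _ "t \<circ> r"]) auto
  ultimately have "l = 0"
    using kernel by blast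
  with \<open>norm l = 1\<close> show False
    by simp
qed

theorem proposition3p2:
  fixes F :: "'a::banach \<Rightarrow> 'b::banach set"
    and A :: "'a set" and xb :: 'a and yb :: 'b
  assumes "closed (gph F)" and "convex (gph F)"
    and "closed A" and "convex A"
    and "xb \<in> {x. yb \<in> F x} \<inter> A"
    and "compact (closure (DFinv_set F yb xb (cball 0 1)
           \<inter> {t + b | t b. t \<in> contingent_cone A xb \<and> b \<in> cball 0 1} \<inter> cball 0 1))"
  shows "ssubreg A F xb yb < \<infinity> \<longleftrightarrow> DFinv F yb xb 0 \<inter> contingent_cone A xb = {0}"
proof -
  have "xb \<in> A" and gph: "(xb, yb) \<in> gph F"
    using assms(5) by (auto simp: gph_def)
  have "0 \<in> DFinv F yb xb 0 \<inter> contingent_cone A xb"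
    using zero_in_contingent_cone[OF gph] zero_in_contingent_cone[OF \<open>xb \<in> A\<close>]
    by (simp add: DFinv_def zero_prod_def)
  then show ?thesis
    unfolding ssubreg_less_infinity_iff
    using ssubreg_bound_imp_trivial_kernel[OF assms(4) \<open>xb \<in> A\<close>]
      trivial_kernel_imp_ssubreg_bound[OF assms(2,4) \<open>xb \<in> A\<close> gph assms(6)]
    by blast
qed

end
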